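(* Let $i\in\{1,2\}$. Fix $\alpha>2$, $P,\lambda_B,\gamma_{th}>0$, $\sigma^2\ge0$, $a:=\mathcal{A}_i^1\mathcal{R}_i^1\in(0,1]$, $\lambda_i^a>0$, an integer repetition number $K_i\ge4$, radii $0<D_{i-1}<D_i$, and $c=3.575$. Define $$q_i(l)=\int_{D_{i-1}}^{D_i}\exp\Big(-\frac{l\gamma_{th}\sigma^2r^\alpha}{P}-2\pi a\lambda_i^a\mathcal{F}_i(r,l)\Big)f_R(r)\,dr,\qquad \mathcal{F}_i(r,l)=\int_{D_i}^{\infty}\Big(1-\Big(\frac{1}{1+\gamma_{th}r^\alpha y^{-\alpha}}\Big)^{l}\Big)y\,dy.$$ Here either - (CE group 1, or CE group 2 in Case 1) $f_R(r)=2r/(D_i^2-D_{i-1}^2)$; or - (CE group 2 in Case 2) $D_{i-1}=D_1$, $D_i=\infty$ in the outer integral and $f_R(r)=2\pi\lambda_Br\exp(-\lambda_B\pi(r^2-D_1^2))$, with $\mathcal{F}_2(r,l)=\int_{D_1}^{\infty}\big(1-(1+\gamma_{th}r^\alpha y^{-\alpha})^{-l}\big)y\,dy$. Suppose the following: - Each device (the typical device $m=0$ and each of the $N_i$ intra-cell interferers $m=1,\dots,N_i$) transmits its preamble $K_i$ times. - Repetition $k$ succeeds (event $\theta_k$) iff all 4 of its symbol-group SINRs are $\ge\gamma_{th}$. - For every set of $k$ repetitions, the joint success probability of each device is $q_i(4k)$. - The PMF of $N_i$ is $$\mathbb{P}[N_i=n]=\frac{c^{c+1}\Gamma(n+c+1)(a\lambda_i^a/\lambda_B)^n}{\Gamma(c+1)\Gamma(n+1)(a\lambda_i^a/\lambda_B+c)^{n+c+1}}.$$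 Define $\mathbb{P}_{S,i,m}[K_i]=\mathbb{P}[\bigcup_{k=1}^{K_i}\theta_k]$ for device $m$, and $$\mathcal{P}_i^1=\sum_{n=0}^\infty\mathbb{P}[N_i=n]\,\mathbb{P}_{S,i,0}[K_i]\prod_{m=1}^{n}(1-\mathbb{P}_{S,i,m}[K_i]).$$ Then $$\mathcal{P}_i^1=\sum_{n=0}^\infty\mathbb{P}[N_i=n]\,\Theta_i(1-\Theta_i)^n,\qquad \Theta_i=\sum_{k=1}^{K_i}(-1)^{k+1}\binom{K_i}{k}q_i(4k).$$
   Context: This is the RACH model for CE groups 1 and 2 of an NB-IoT network in the first time slot; devices in these groups transmit with fixed power $P$. A RACH attempt succeeds iff the typical device's preamble is received in at least one repetition and no intra-cell device using the same preamble is also received (no collision). - The quantity $q_i(l)$ is the probability that all $l$ symbol-group SINRs exceed $\gamma_{th}$. It is computed in the model where the typical device is at distance $R\sim f_R$ from its base station and the interferers form a PPP of intensity $a\lambda_i^a$ outside radius $D_i$ (or outside $D_1$ in Case 2), with i.i.d. Exp(1) Rayleigh fading. - In the paper $D_0=(\delta_1\omega/P_{DL})^{-1/\alpha}$, $D_1=(\delta_2\omega/P_{DL})^{-1/\alpha}$ and $D_2=1/\sqrt{\pi\lambda_B}$. - $\lambda_i^a=\lambda_i/S_i$. - $\mathcal{A}_i^1$ and $\mathcal{R}_i^1$ are the non-empty-buffer and non-restriction probabilities. *)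

theory Defs
  imports "HOL-Probability.Probability"
begin

definition F_int :: "real \<Rightarrow> real \<Rightarrow> real \<Rightarrow> real \<Rightarrow> nat \<Rightarrow> real" where
  "F_int \<alpha> \<gamma>th L r l =
     (LBINT y:{L..}. (1 - (1 / (1 + \<gamma>th * r powr \<alpha> * y powr (-\<alpha>))) ^ l) * y)"

text \<open>q_i(l), CE group 1 or CE group 2 in Case 1: f_R(r) = 2r/(Dhi^2 - Dlo^2) on [Dlo, Dhi],
  interferers outside Dhi.\<close>
definition q_case1 :: "real \<Rightarrow> real \<Rightarrow> real \<Rightarrow> real \<Rightarrow> real \<Rightarrow> real \<Rightarrow> real \<Rightarrow> real \<Rightarrow> nat \<Rightarrow> real" where
  "q_case1 \<alpha> \<gamma>th \<sigma>2 P a lamA Dlo Dhi l =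
     (LBINT r:{Dlo..Dhi}.
        exp (- (real l * \<gamma>th * \<sigma>2 * r powr \<alpha>) / P - 2 * pi * a * lamA * F_int \<alpha> \<gamma>th Dhi r l)
        * (2 * r / (Dhi\<^sup>2 - Dlo\<^sup>2)))"

definition q_case2 :: "real \<Rightarrow> real \<Rightarrow> real \<Rightarrow> real \<Rightarrow> real \<Rightarrow> real \<Rightarrow> real \<Rightarrow> real \<Rightarrow> nat \<Rightarrow> real" where
  "q_case2 \<alpha> \<gamma>th \<sigma>2 P a lamA lamB D1 l =
     (LBINT r:{D1..}.
        exp (- (real l * \<gamma>th * \<sigma>2 * r powr \<alpha>) / P - 2 * pi * a * lamA * F_int \<alpha> \<gamma>th D1 r l)
        * (2 * pi * lamB * r * exp (- lamB * pi * (r\<^sup>2 - D1\<^sup>2))))"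

definition N_pmf :: "real \<Rightarrow> real \<Rightarrow> real \<Rightarrow> real \<Rightarrow> nat \<Rightarrow> real" where
  "N_pmf c a lamA lamB n =
     (let \<rho> = a * lamA / lamB in
      c powr (c + 1) * Gamma (real n + c + 1) * \<rho> ^ n /
      (Gamma (c + 1) * Gamma (real n + 1) * (\<rho> + c) powr (real n + c + 1)))"

end

theory Submission
  imports Defs
begin

(* The joint success probability of any k repetitions of a device depends only on k, so
   inclusion-exclusion gives every device the same success probability Theta, and the
   product over the n interferers collapses to (1 - Theta)^n. *)

lemma sum_nonempty_subsets_by_card:
  fixes g :: "nat \<Rightarrow> 'a::comm_semiring_1"
  assumes "finite A"
  shows "(\<Sum>B | B \<subseteq> A \<and> B \<noteq> {}. g (card B)) = (\<Sum>k=1..card A. of_nat (card A choose k) * g k)"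
proof -
  let ?S = "{B. B \<subseteq> A \<and> B \<noteq> {}}"
  have card_range: "card ` ?S \<subseteq> {1..card A}"
    using assms by (auto simp: card_mono Suc_le_eq card_gt_0_iff dest: finite_subset)
  have "(\<Sum>B\<in>?S. g (card B)) = (\<Sum>k=1..card A. \<Sum>B | B \<in> ?S \<and> card B = k. g (card B))"
    using assms card_range by (intro sum.group[symmetric]) auto
  also have "\<dots> = (\<Sum>k=1..card A. of_nat (card A choose k) * g k)"
  proof (rule sum.cong[OF refl])
    fix k assume "k \<in> {1..card A}"
    then have "{B. B \<in> ?S \<and> card B = k} = {B. B \<subseteq> A \<and> card B = k}" by auto
    then show "(\<Sum>B | B \<in> ?S \<and> card B = k. g (card B)) = of_nat (card A choose k) * g k"
      using n_subsets[OF assms, of k] by simp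
  qed
  finally show ?thesis .
qed

lemma (in finite_measure) measure_UN_exchangeable:
  assumes "finite A" and sets: "\<And>a. a \<in> A \<Longrightarrow> X a \<in> sets M"
    and joint: "\<And>S. S \<subseteq> A \<Longrightarrow> S \<noteq> {} \<Longrightarrow> measure M (\<Inter>a\<in>S. X a) = p (card S)"
  shows "measure M (\<Union>a\<in>A. X a) = (\<Sum>k=1..card A. (-1) ^ (k + 1) * real (card A choose k) * p k)"
proof -
  interpret Incl_Excl "\<lambda>S. S \<in> sets M" "measure M"
    by unfold_locales (auto simp: disjnt_def measure_Un_null_set finite_measure_Union)
  have "measure M (\<Union>a\<in>A. X a) = (\<Sum>B | B \<subseteq> A \<and> B \<noteq> {}. (-1) ^ (card B + 1) * measure M (\<Inter>a\<in>B. X a))"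
    using restricted_indexed[OF \<open>finite A\<close>] sets by simp
  also have "\<dots> = (\<Sum>B | B \<subseteq> A \<and> B \<noteq> {}. (-1) ^ (card B + 1) * p (card B))"
    by (rule sum.cong) (auto simp: joint)
  also have "\<dots> = (\<Sum>k=1..card A. (-1) ^ (k + 1) * real (card A choose k) * p k)"
    using sum_nonempty_subsets_by_card[OF \<open>finite A\<close>, of "\<lambda>k. (-1) ^ (k + 1) * p k"]
    by (simp add: mult_ac)
  finally show ?thesis .
qed

theorem theorem2:
  fixes i K :: nat
    and \<alpha> P lamB \<gamma>th \<sigma>2 a lamA Dprev Di c :: real
    and q :: "nat \<Rightarrow> real"
    and M :: "'s measure"
    and \<theta> :: "nat \<Rightarrow> nat \<Rightarrow> 's set"
  assumes "i \<in> {1, 2}"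
    and "\<alpha> > 2" and "P > 0" and "lamB > 0" and "\<gamma>th > 0" and "\<sigma>2 \<ge> 0"
    and "0 < a" and "a \<le> 1" and "lamA > 0" and "K \<ge> 4"
    and "0 < Dprev" and "Dprev < Di"
    and "c = 3.575"
    and q_def: "q = q_case1 \<alpha> \<gamma>th \<sigma>2 P a lamA Dprev Di
              \<or> (i = 2 \<and> q = q_case2 \<alpha> \<gamma>th \<sigma>2 P a lamA lamB Dprev)"
    and "prob_space M"
    and events: "\<And>m k. \<theta> m k \<in> sets M"
    and joint: "\<And>m S. S \<subseteq> {1..K} \<Longrightarrow> S \<noteq> {} \<Longrightarrow>
                  measure M (\<Inter>k\<in>S. \<theta> m k) = q (4 * card S)"
  shows "(\<Sum>n. N_pmf c a lamA lamB n * measure M (\<Union>k\<in>{1..K}. \<theta> 0 k)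
             * (\<Prod>m\<in>{1..n}. 1 - measure M (\<Union>k\<in>{1..K}. \<theta> m k)))
       = (\<Sum>n. N_pmf c a lamA lamB n
             * (\<Sum>k=1..K. (-1) ^ (k + 1) * real (K choose k) * q (4 * k))
             * (1 - (\<Sum>k=1..K. (-1) ^ (k + 1) * real (K choose k) * q (4 * k))) ^ n)"
proof -
  interpret prob_space M by fact
  have success: "measure M (\<Union>k\<in>{1..K}. \<theta> m k)
      = (\<Sum>k=1..K. (-1) ^ (k + 1) * real (K choose k) * q (4 * k))" for m
    using measure_UN_exchangeable[of "{1..K}" "\<theta> m" "\<lambda>k. q (4 * k)"] events joint by simp
  show ?thesis
    unfolding success by (simp only: mult.assoc prod_constant card_atLeastAtMost) simp
qed

end
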